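(* Let $\mathcal{L}=\mathfrak{sl}_n\dot+\mathcal{I}$ be as in the context and let $\Delta:\mathcal{L}\to\mathcal{L}$ be a linear map such that $\Delta_{\mathfrak{sl}_n}(x)=-x$ for all $x\in\mathfrak{sl}_n$. Then $\Delta$ is not a local automorphism of $\mathcal{L}$.
   Context: $\mathcal{L}=\mathfrak{sl}_n\oplus\mathcal{I}$ is a simple complex Leibniz algebra: $\mathfrak{sl}_n$ is the Lie algebra of trace-zero complex $n\times n$ matrices ($n\ge2$), $\mathcal{I}$ is a nonzero irreducible finite-dimensional right $\mathfrak{sl}_n$-module with nontrivial action $v\mapsto[v,g]$, and the bracket is $[(g_1,v_1),(g_2,v_2)]=([g_1,g_2],[v_1,g_2])$. An automorphism of $\mathcal{L}$ is an invertible linear map preserving the bracket; a linear map $\Delta$ is a local automorphism if for each $x\in\mathcal{L}$ there is an automorphism $\Phi_x$ with $\Phi_x(x)=\Delta(x)$. For a linear map $\Delta$ of $\mathcal{L}$, $\Delta_{\mathfrak{sl}_n}=p\circ\Delta|_{\mathfrak{sl}_n}$, where $p$ is the projection onto $\mathfrak{sl}_n$ along $\mathcal{I}$. *)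

theory Defs
  imports "HOL-Analysis.Analysis"
begin

text \<open>The module I is modelled as complex^'m (any nonzero finite-dimensional
  complex vector space is isomorphic to one of these).\<close>

definition sl :: "(complex^'n^'n) set" where
  "sl = {A. trace A = 0}"

definition mscale :: "complex \<Rightarrow> complex^'n^'n \<Rightarrow> complex^'n^'n" where
  "mscale c A = (\<chi> i j. c * A $ i $ j)"

definition Lcar :: "((complex^'n^'n) \<times> (complex^'m)) set" where
  "Lcar = {(g, v). g \<in> sl}"

definition lscale :: "complex \<Rightarrow> (complex^'n^'n) \<times> (complex^'m) \<Rightarrow> (complex^'n^'n) \<times> (complex^'m)" where
  "lscale c x = (mscale c (fst x), c *s snd x)"

definition lbr :: "(complex^'m \<Rightarrow> complex^'n^'n \<Rightarrow> complex^'m)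
   \<Rightarrow> (complex^'n^'n) \<times> (complex^'m) \<Rightarrow> (complex^'n^'n) \<times> (complex^'m) \<Rightarrow> (complex^'n^'n) \<times> (complex^'m)" where
  "lbr act x y = (fst x ** fst y - fst y ** fst x, act (snd x) (fst y))"

definition L_linear :: "((complex^'n^'n) \<times> (complex^'m) \<Rightarrow> (complex^'n^'n) \<times> (complex^'m)) \<Rightarrow> bool" where
  "L_linear f \<longleftrightarrow> f ` Lcar \<subseteq> Lcar \<and>
     (\<forall>x\<in>Lcar. \<forall>y\<in>Lcar. f (x + y) = f x + f y) \<and>
     (\<forall>c. \<forall>x\<in>Lcar. f (lscale c x) = lscale c (f x))"

text \<open>Right sl_n-module structure v \<mapsto> [v,g] on complex^'m.\<close>
definition right_sl_module :: "(complex^'m \<Rightarrow> complex^'n^'n \<Rightarrow> complex^'m) \<Rightarrow> bool" where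
  "right_sl_module act \<longleftrightarrow>
     (\<forall>v w. \<forall>g\<in>sl. act (v + w) g = act v g + act w g) \<and>
     (\<forall>c v. \<forall>g\<in>sl. act (c *s v) g = c *s act v g) \<and>
     (\<forall>v. \<forall>g\<in>sl. \<forall>h\<in>sl. act v (g + h) = act v g + act v h) \<and>
     (\<forall>c v. \<forall>g\<in>sl. act v (mscale c g) = c *s act v g) \<and>
     (\<forall>v. \<forall>g\<in>sl. \<forall>h\<in>sl. act v (g ** h - h ** g) = act (act v g) h - act (act v h) g)"

definition sl_invariant_subspace :: "(complex^'m \<Rightarrow> complex^'n^'n \<Rightarrow> complex^'m) \<Rightarrow> (complex^'m) set \<Rightarrow> bool" where
  "sl_invariant_subspace act W \<longleftrightarrow>
     0 \<in> W \<and> (\<forall>v\<in>W. \<forall>w\<in>W. v + w \<in> W) \<and> (\<forall>c. \<forall>v\<in>W. c *s v \<in> W) \<and>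
     (\<forall>v\<in>W. \<forall>g\<in>(sl :: (complex^'n^'n) set). act v g \<in> W)"

definition irreducible_module :: "(complex^'m \<Rightarrow> complex^'n^'n \<Rightarrow> complex^'m) \<Rightarrow> bool" where
  "irreducible_module act \<longleftrightarrow>
     (\<forall>W. sl_invariant_subspace act W \<longrightarrow> W = {0} \<or> W = UNIV)"

definition nontrivial_action :: "(complex^'m \<Rightarrow> complex^'n^'n \<Rightarrow> complex^'m) \<Rightarrow> bool" where
  "nontrivial_action act \<longleftrightarrow> (\<exists>v. \<exists>g\<in>sl. act v g \<noteq> 0)"

definition L_automorphism :: "(complex^'m \<Rightarrow> complex^'n^'n \<Rightarrow> complex^'m)
    \<Rightarrow> ((complex^'n^'n) \<times> (complex^'m) \<Rightarrow> (complex^'n^'n) \<times> (complex^'m)) \<Rightarrow> bool" where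
  "L_automorphism act \<Phi> \<longleftrightarrow> L_linear \<Phi> \<and> bij_betw \<Phi> Lcar Lcar \<and>
     (\<forall>x\<in>Lcar. \<forall>y\<in>Lcar. \<Phi> (lbr act x y) = lbr act (\<Phi> x) (\<Phi> y))"

definition L_local_automorphism :: "(complex^'m \<Rightarrow> complex^'n^'n \<Rightarrow> complex^'m)
    \<Rightarrow> ((complex^'n^'n) \<times> (complex^'m) \<Rightarrow> (complex^'n^'n) \<times> (complex^'m)) \<Rightarrow> bool" where
  "L_local_automorphism act \<Delta> \<longleftrightarrow>
     (\<forall>x\<in>Lcar. \<exists>\<Phi>. L_automorphism act \<Phi> \<and> \<Phi> x = \<Delta> x)"

end

theory Submission
  imports Defs "HOL-Computational_Algebra.Fundamental_Theorem_Algebra"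
begin

text \<open>Since \<open>[x, (0, w)] = 0\<close> for every \<open>x\<close>, the \<open>sl\<^sub>n\<close>-part of \<open>\<Phi> (0, w)\<close> is central for every
  automorphism \<open>\<Phi>\<close>, hence zero: automorphisms map \<open>I\<close> into itself. So if \<open>\<Delta>\<close> were a local
  automorphism, the automorphism agreeing with \<open>\<Delta>\<close> at \<open>(g, v)\<close> would send it to
  \<open>(-g, A g + B v)\<close>, where \<open>B v\<close> is the \<open>I\<close>-component of \<open>\<Delta> (0, v)\<close>. Comparing the images of the
  brackets \<open>[(g, v), (g, v)] = (0, v\<cdot>g)\<close> and \<open>[(0, v\<cdot>g), (g, v)]\<close> shows that \<open>B\<close> preserves and
  reflects the kernel of every \<open>g\<close> and turns an eigenvector of \<open>g\<close> with eigenvalue \<open>\<mu>\<close> on the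
  image of \<open>g\<close> into one with eigenvalue \<open>-\<mu>\<close>.

  Take an sl2-triple \<open>(h, e, f)\<close> of matrix units. An \<open>h\<close>-eigenvector killed by \<open>f\<close> has an
  eigenvalue \<open>l \<in> \<nat>\<close>, since the string obtained by applying \<open>e\<close> must terminate; \<open>B\<close> produces
  one with eigenvalue \<open>-l\<close>, so \<open>l = 0\<close>. Descending with \<open>f\<close> then shows that all eigenvalues of
  \<open>h\<close> are \<open>\<le> 0\<close>, and the triple \<open>(-h, f, e)\<close> shows they are \<open>\<ge> 0\<close>. Hence \<open>h\<close> has no nonzero
  eigenvalue, which forces \<open>e\<close> to act trivially; the off-diagonal matrix units generate \<open>sl\<^sub>n\<close>,
  so the action is trivial, a contradiction.\<close>

section \<open>Polynomials in a linear operator\<close>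

definition poly_op :: "(complex^'m \<Rightarrow> complex^'m) \<Rightarrow> complex poly \<Rightarrow> complex^'m \<Rightarrow> complex^'m" where
  "poly_op T p v = (\<Sum>k\<le>degree p. coeff p k *s (T^^k) v)"

lemma poly_op_0 [simp]: "poly_op T 0 v = 0"
  by (simp add: poly_op_def)

lemma poly_op_eq_sum:
  assumes "degree p < N"
  shows "poly_op T p v = (\<Sum>k<N. coeff p k *s (T^^k) v)"
  unfolding poly_op_def
  by (rule sum.mono_neutral_left) (use assms in \<open>auto simp: coeff_eq_0\<close>)

lemma poly_op_monom [simp]: "poly_op T (monom c k) v = c *s (T^^k) v"
  by (subst poly_op_eq_sum[where N = "Suc k"])
     (simp_all add: degree_monom_le le_imp_less_Suc if_distrib cong: if_cong)

lemma independent_card_le: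
  fixes S :: "('a::field^'m) set"
  assumes "vec.independent S"
  shows "card S \<le> CARD('m)"
  using vec.independent_card_le_dim[OF subset_UNIV assms] by (simp add: card_cart_basis)

context
  fixes T :: "complex^'m \<Rightarrow> complex^'m"
  assumes linear_T: "Vector_Spaces.linear (*s) (*s) T"
begin

interpretation T: Vector_Spaces.linear "(*s)" "(*s)" T
  by (fact linear_T)

lemma poly_op_pCons: "poly_op T (pCons a p) v = a *s v + T (poly_op T p v)"
proof -
  have "poly_op T (pCons a p) v = (\<Sum>k<Suc (Suc (degree p)). coeff (pCons a p) k *s (T^^k) v)"
    by (rule poly_op_eq_sum) (use degree_pCons_le[of a p] in simp)
  also have "\<dots> = a *s v + (\<Sum>k<Suc (degree p). coeff p k *s T ((T^^k) v))"
    by (subst sum.lessThan_Suc_shift) simp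
  also have "\<dots> = a *s v + T (poly_op T p v)"
    by (simp add: poly_op_def T.sum T.scale lessThan_Suc_atMost)
  finally show ?thesis .
qed

lemma poly_op_add: "poly_op T (p + q) v = poly_op T p v + poly_op T q v"
  by (induction p q rule: poly_induct2)
     (simp_all add: poly_op_pCons T.add algebra_simps)

lemma poly_op_smult: "poly_op T (smult c p) v = c *s poly_op T p v"
  by (induction p rule: pCons_induct)
     (simp_all add: poly_op_pCons T.scale vec.scale_right_distrib)

lemma poly_op_diff: "poly_op T (p - q) v = poly_op T p v - poly_op T q v"
  using poly_op_add[of p "smult (-1) q" v] poly_op_smult[of "-1" q v] by simp

lemma poly_op_mult: "poly_op T (p * q) v = poly_op T p (poly_op T q v)"
  by (induction p rule: pCons_induct) (simp_all add: poly_op_pCons poly_op_add poly_op_smult)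

lemma poly_op_linear_factor: "poly_op T [:a, 1:] v = a *s v + T v"
  by (simp add: poly_op_pCons)

lemma poly_op_sum: "poly_op T (\<Sum>x\<in>S. f x) v = (\<Sum>x\<in>S. poly_op T (f x) v)"
  by (induction S rule: infinite_finite_induct) (simp_all add: poly_op_add)

lemma poly_op_X_power: "poly_op T ([:0, 1:] ^ k) v = (T^^k) v"
  using poly_op_monom[of T 1 k v] by (simp add: monom_altdef)

lemma poly_op_eq_0_imp_eq_0:
  assumes "q \<noteq> 0"
    and "\<And>r y. poly q r = 0 \<Longrightarrow> T y = r *s y \<Longrightarrow> y = 0"
    and "poly_op T q y = 0"
  shows "y = 0"
  using assms
proof (induction "degree q" arbitrary: q y rule: less_induct)
  case less
  show ?case
  proof (cases "degree q = 0")
    case True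
    then obtain c where "q = [:c:]" by (metis degree_eq_zeroE)
    with less.prems show ?thesis by (simp add: poly_op_pCons)
  next
    case False
    then have "\<not> constant (poly q)" by (simp add: constant_degree)
    then obtain r where r: "poly q r = 0"
      using fundamental_theorem_of_algebra by blast
    then obtain q' where q: "q = [:-r, 1:] * q'"
      by (metis dvdE poly_eq_0_iff_dvd)
    with less.prems(1) have "q' \<noteq> 0" by auto
    define z where "z = poly_op T q' y"
    have "- r *s z + T z = 0"
      using less.prems(3) by (simp only: q z_def poly_op_mult poly_op_linear_factor)
    then have "T z = r *s z" by (simp add: add_eq_0_iff)
    then have "z = 0" using less.prems(2)[OF r] by blast
    show ?thesis
    proof (rule less.hyps)
      have "degree q = degree [:-r, 1:] + degree q'"
        unfolding q by (rule degree_mult_eq) (use \<open>q' \<noteq> 0\<close> in auto)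
      then show "degree q' < degree q" by simp
      show "poly q' r' = 0 \<Longrightarrow> T y' = r' *s y' \<Longrightarrow> y' = 0" for r' y'
        using less.prems(2)[of r' y'] by (simp add: q)
      show "q' \<noteq> 0" by fact
      show "poly_op T q' y = 0" using \<open>z = 0\<close> by (simp only: z_def)
    qed
  qed
qed

lemma ex_poly_op_annihilator: "\<exists>p. p \<noteq> 0 \<and> poly_op T p v = 0"
proof -
  define N where "N = CARD('m)"
  define x where "x k = (T^^k) v" for k
  show ?thesis
  proof (cases "inj_on x {..N}")
    case False
    then obtain i j where ij: "i \<noteq> j" "x i = x j"
      unfolding inj_on_def by auto
    define p :: "complex poly" where "p = monom 1 i - monom 1 j"
    have "coeff p i = 1"
      using ij by (simp add: p_def coeff_monom)
    then have "p \<noteq> 0" by auto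
    moreover have "poly_op T p v = 0"
      using ij by (simp only: p_def x_def poly_op_diff poly_op_monom vec.scale_one diff_self)
    ultimately show ?thesis by blast
  next
    case True
    define S where "S = x ` {..N}"
    have "card S = Suc N"
      using True by (simp add: S_def card_image)
    then have "vec.dependent S"
      using independent_card_le[of S] by (auto simp: N_def)
    then obtain u where u: "\<exists>y\<in>S. u y \<noteq> 0" "(\<Sum>y\<in>S. u y *s y) = 0"
      using vec.dependent_finite[of S] by (auto simp: S_def)
    define p where "p = (\<Sum>k\<le>N. monom (u (x k)) k)"
    have "poly_op T p v = (\<Sum>k\<le>N. u (x k) *s x k)"
      by (simp only: p_def x_def poly_op_sum poly_op_monom)
    also have "\<dots> = (\<Sum>y\<in>S. u y *s y)"
      unfolding S_def by (simp only: sum.reindex[OF True] o_def)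
    finally have "poly_op T p v = 0"
      using u(2) by simp
    moreover from u(1) obtain k where k: "k \<le> N" "u (x k) \<noteq> 0"
      by (auto simp: S_def)
    have "coeff p k = u (x k)"
      using k by (simp add: p_def coeff_sum coeff_monom)
    with k have "p \<noteq> 0" by auto
    ultimately show ?thesis by blast
  qed
qed

lemma funpow_apply_eq_0_if_no_nonzero_eigenvalue:
  assumes no_eigenvalue: "\<And>y r. T y = r *s y \<Longrightarrow> y \<noteq> 0 \<Longrightarrow> r = 0"
  shows "\<exists>k. (T^^k) v = 0"
proof -
  obtain p where p: "p \<noteq> 0" "poly_op T p v = 0"
    using ex_poly_op_annihilator by blast
  obtain q where q: "p = [:0, 1:] ^ order 0 p * q" "\<not> [:0, 1:] dvd q"
    using order_decomp[OF p(1), of 0] unfolding minus_zero by blast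
  have "poly_op T q ((T^^order 0 p) v) = poly_op T (q * [:0, 1:] ^ order 0 p) v"
    by (simp only: poly_op_mult poly_op_X_power)
  also have "\<dots> = 0"
    using p(2) q(1) by (metis mult.commute)
  finally have "poly_op T q ((T^^order 0 p) v) = 0" .
  moreover have "q \<noteq> 0"
    using p(1) q(1) by auto
  moreover have "y = 0" if "poly q r = 0" "T y = r *s y" for r y
  proof (rule ccontr)
    assume "y \<noteq> 0"
    with no_eigenvalue that(2) have "r = 0" by blast
    with that(1) q(2) show False
      using poly_eq_0_iff_dvd[of q 0] by simp
  qed
  ultimately show ?thesis
    using poly_op_eq_0_imp_eq_0 by blast
qed

lemma eigenvector_combination_eq_0_imp:
  fixes x :: "nat \<Rightarrow> complex^'m"
  assumes eigenvector: "\<And>k. x k \<noteq> 0" "\<And>k. T (x k) = \<mu> k *s x k" and "inj \<mu>"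
    and "(\<Sum>k\<le>N. c k *s x k) = 0" and "k \<le> N"
  shows "c k = 0"
  using assms(4,5)
proof (induction N arbitrary: c k)
  case 0
  then show ?case using eigenvector(1)[of 0] by simp
next
  case (Suc N)
  let ?m = "\<mu> (Suc N)"
  have "(\<Sum>k\<le>Suc N. (c k * (\<mu> k - ?m)) *s x k)
      = (\<Sum>k\<le>Suc N. (c k * \<mu> k) *s x k) - (\<Sum>k\<le>Suc N. (c k * ?m) *s x k)"
    by (simp add: right_diff_distrib vec.scale_left_diff_distrib sum_subtractf)
  also have "\<dots> = T (\<Sum>k\<le>Suc N. c k *s x k) - ?m *s (\<Sum>k\<le>Suc N. c k *s x k)"
    by (simp only: T.sum T.scale eigenvector(2) vec.scale_scale vec.scale_sum_right mult.commute)
  also have "\<dots> = 0"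
    using Suc.prems(1) by simp
  finally have "(\<Sum>k\<le>Suc N. (c k * (\<mu> k - ?m)) *s x k) = 0" .
  then have sum_N: "(\<Sum>k\<le>N. (c k * (\<mu> k - ?m)) *s x k) = 0"
    by simp
  then have c_le_N: "c j = 0" if "j \<le> N" for j
  proof -
    have "c j * (\<mu> j - ?m) = 0"
      using Suc.IH[OF sum_N that] .
    moreover have "\<mu> j \<noteq> ?m"
      using \<open>inj \<mu>\<close> that by (auto dest: injD)
    ultimately show ?thesis by simp
  qed
  show ?case
  proof (cases "k \<le> N")
    case False
    with Suc.prems have "k = Suc N" "c (Suc N) *s x (Suc N) = 0"
      by (simp_all add: c_le_N)
    then show ?thesis using eigenvector(1)[of "Suc N"] by simp
  qed (use c_le_N in auto)
qed

lemma no_injective_eigenvalue_sequence: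
  fixes x :: "nat \<Rightarrow> complex^'m"
  assumes eigenvector: "\<And>k. x k \<noteq> 0" "\<And>k. T (x k) = \<mu> k *s x k" and "inj \<mu>"
  shows False
proof -
  define N where "N = CARD('m)"
  have "inj x"
  proof (rule injI)
    fix i j assume "x i = x j"
    then have "\<mu> i *s x i = \<mu> j *s x i"
      using eigenvector(2)[of i] eigenvector(2)[of j] by metis
    then have "(\<mu> i - \<mu> j) *s x i = 0"
      by (simp add: vec.scale_left_diff_distrib)
    then show "i = j"
      using eigenvector(1)[of i] \<open>inj \<mu>\<close> by (auto dest: injD)
  qed
  define S where "S = x ` {..N}"
  have "vec.independent S"
  proof
    assume "vec.dependent S"
    then obtain u where u: "\<exists>y\<in>S. u y \<noteq> 0" "(\<Sum>y\<in>S. u y *s y) = 0"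
      using vec.dependent_finite[of S] by (auto simp: S_def)
    have "(\<Sum>k\<le>N. u (x k) *s x k) = 0"
      using u(2) unfolding S_def by (simp add: sum.reindex[OF inj_on_subset[OF \<open>inj x\<close>]] o_def)
    then have "u (x k) = 0" if "k \<le> N" for k
      using eigenvector_combination_eq_0_imp[OF eigenvector \<open>inj \<mu>\<close>, where c = "\<lambda>k. u (x k)"] that
      by blast
    with u(1) show False by (auto simp: S_def)
  qed
  moreover have "card S = Suc N"
    using \<open>inj x\<close> by (simp add: S_def card_image inj_on_subset)
  ultimately show False
    using independent_card_le[of S] by (simp add: N_def)
qed

lemma eigenvector_orbit_vanishes:
  fixes A :: "complex^'m \<Rightarrow> complex^'m"
  assumes "w \<noteq> 0" and eigenvector: "\<And>k. T ((A^^k) w) = \<mu> k *s (A^^k) w" and "inj \<mu>"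
  obtains m where "(A^^m) w \<noteq> 0" "(A^^Suc m) w = 0"
proof -
  have "\<exists>k. (A^^k) w = 0"
    using no_injective_eigenvalue_sequence[of "\<lambda>k. (A^^k) w" \<mu>] eigenvector \<open>inj \<mu>\<close> by blast
  then obtain k where "(A^^k) w = 0" ..
  moreover have "\<not> (A^^0) w = 0"
    using \<open>w \<noteq> 0\<close> by simp
  ultimately obtain m where "\<forall>i\<le>m. (A^^i) w \<noteq> 0" "(A^^Suc m) w = 0"
    using ex_least_nat_less[of "\<lambda>k. (A^^k) w = 0" k] by blast
  then show ?thesis
    using that by blast
qed

end

section \<open>Representations of sl2\<close>

text \<open>\<open>H, E, F\<close> are \<open>x \<mapsto> x\<cdot>h, x\<cdot>e, x\<cdot>f\<close> for an sl2-triple \<open>(h, e, f)\<close> acting on the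
  right, so that \<open>[h, e] = 2e\<close> reads \<open>E \<circ> H - H \<circ> E = 2E\<close>.\<close>

locale sl2_rep =
  fixes H E F :: "complex^'m \<Rightarrow> complex^'m"
  assumes linear_H: "Vector_Spaces.linear (*s) (*s) H"
    and linear_E: "Vector_Spaces.linear (*s) (*s) E"
    and linear_F: "Vector_Spaces.linear (*s) (*s) F"
    and bracket_HE: "E (H x) - H (E x) = 2 *s E x"
    and bracket_HF: "F (H x) - H (F x) = (-2) *s F x"
    and bracket_EF: "F (E x) - E (F x) = H x"
begin

sublocale H: Vector_Spaces.linear "(*s)" "(*s)" H by (fact linear_H)
sublocale E: Vector_Spaces.linear "(*s)" "(*s)" E by (fact linear_E)
sublocale F: Vector_Spaces.linear "(*s)" "(*s)" F by (fact linear_F)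

lemma H_funpow_E:
  assumes "H w = l *s w"
  shows "H ((E^^k) w) = (l - 2 * of_nat k) *s (E^^k) w"
proof (induction k)
  case 0
  show ?case using assms by simp
next
  case (Suc k)
  have "H ((E^^Suc k) w) = E (H ((E^^k) w)) - 2 *s E ((E^^k) w)"
    using bracket_HE[of "(E^^k) w"] by (simp add: algebra_simps)
  also have "\<dots> = ((l - 2 * of_nat k) - 2) *s (E^^Suc k) w"
    by (simp only: Suc.IH E.scale funpow.simps(2) o_apply) (simp only: vec.scale_left_diff_distrib)
  also have "(l - 2 * of_nat k) - 2 = l - 2 * of_nat (Suc k)"
    by simp
  finally show ?case .
qed

lemma H_funpow_F:
  assumes "H v = \<nu> *s v"
  shows "H ((F^^k) v) = (\<nu> + 2 * of_nat k) *s (F^^k) v"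
proof (induction k)
  case 0
  show ?case using assms by simp
next
  case (Suc k)
  have "H ((F^^Suc k) v) = F (H ((F^^k) v)) + 2 *s F ((F^^k) v)"
    using bracket_HF[of "(F^^k) v"] by (simp add: algebra_simps)
  also have "\<dots> = ((\<nu> + 2 * of_nat k) + 2) *s (F^^Suc k) v"
    by (simp only: Suc.IH F.scale funpow.simps(2) o_apply) (simp only: vec.scale_left_distrib)
  also have "(\<nu> + 2 * of_nat k) + 2 = \<nu> + 2 * of_nat (Suc k)"
    by simp
  finally show ?case .
qed

lemma F_funpow_E:
  assumes "F w = 0" "H w = l *s w"
  shows "F ((E^^Suc k) w) = (of_nat (Suc k) * (l - of_nat k)) *s (E^^k) w"
proof (induction k)
  case 0
  have "F (E w) = H w + E (F w)"
    using bracket_EF[of w] by (simp add: algebra_simps)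
  then show ?case
    using assms by simp
next
  case (Suc k)
  have E_funpow: "E ((E^^j) w) = (E^^Suc j) w" for j
    by simp
  have "F ((E^^Suc (Suc k)) w) = H ((E^^Suc k) w) + E (F ((E^^Suc k) w))"
    using bracket_EF[of "(E^^Suc k) w"] by (simp add: algebra_simps)
  also have "\<dots> = ((l - 2 * of_nat (Suc k)) + of_nat (Suc k) * (l - of_nat k)) *s (E^^Suc k) w"
    by (simp only: Suc.IH H_funpow_E[OF assms(2)] E.scale E_funpow) (simp only: vec.scale_left_distrib)
  also have "(l - 2 * of_nat (Suc k)) + of_nat (Suc k) * (l - of_nat k)
      = of_nat (Suc (Suc k)) * (l - of_nat (Suc k))"
    by (simp add: algebra_simps)
  finally show ?case .
qed

lemma lowest_weight_nat:
  assumes "w \<noteq> 0" "F w = 0" "H w = l *s w"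
  shows "\<exists>m::nat. l = of_nat m"
proof -
  have "inj (\<lambda>k. l - 2 * of_nat k)"
    by (rule injI) simp
  then obtain m where "(E^^m) w \<noteq> 0" "(E^^Suc m) w = 0"
    using eigenvector_orbit_vanishes[OF linear_H assms(1) H_funpow_E[OF assms(3)]] by blast
  with F_funpow_E[OF assms(2,3), of m] have "of_nat (Suc m) * (l - of_nat m) = 0"
    by simp
  then have "l = of_nat m"
    by (simp del: of_nat_Suc)
  then show ?thesis ..
qed

lemma E_eq_0_if_no_nonzero_weight:
  assumes no_weight: "\<And>y r. H y = r *s y \<Longrightarrow> y \<noteq> 0 \<Longrightarrow> r = 0"
  shows "E v = 0"
proof -
  obtain k where "(H^^k) v = 0"
    using funpow_apply_eq_0_if_no_nonzero_eigenvalue[OF linear_H] no_weight by blast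
  define G where "G y = H y + 2 *s y" for y
  have "E (H x) = G (E x)" for x
    using bracket_HE[of x] by (simp add: G_def algebra_simps)
  then have G_E: "(G^^j) (E x) = E ((H^^j) x)" for j x
    by (induction j) simp_all
  have G_inj: "(G^^j) y = 0 \<Longrightarrow> y = 0" for j y
  proof (induction j arbitrary: y)
    case (Suc j)
    then have "G y = 0"
      by (simp only: funpow_Suc_right o_apply)
    then have "H y = (-2) *s y"
      by (simp add: G_def add_eq_0_iff)
    with no_weight show ?case
      by fastforce
  qed simp
  show ?thesis
    using G_E[of k v] \<open>(H^^k) v = 0\<close> G_inj by simp
qed

end

locale sl2_rep_flip = sl2_rep +
  fixes B :: "complex^'m \<Rightarrow> complex^'m"
  assumes F_B: "F v = 0 \<Longrightarrow> F (B v) = 0"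
    and H_B: "H (B v) = 0 \<Longrightarrow> H v = 0"
    and H_square_B: "H (H v) = \<mu> *s H v \<Longrightarrow> H (H (B v)) = (- \<mu>) *s H (B v)"
begin

lemma lowest_weight_eq_0:
  assumes "w \<noteq> 0" "F w = 0" "H w = l *s w"
  shows "l = 0"
proof (rule ccontr)
  assume "l \<noteq> 0"
  obtain m :: nat where m: "l = of_nat m"
    using lowest_weight_nat[OF assms] by blast
  define w' where "w' = H (B w)"
  have "F w' = 0"
    using bracket_HF[of "B w"] F_B[OF assms(2)] by (simp add: w'_def)
  moreover have "H w' = (- l) *s w'"
    using H_square_B assms(3) by (simp add: w'_def H.scale)
  moreover have "w' \<noteq> 0"
    using H_B[of w] assms(1,3) \<open>l \<noteq> 0\<close> by (auto simp: w'_def)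
  ultimately obtain m' :: nat where "- l = of_nat m'"
    using lowest_weight_nat by blast
  with m have "of_nat (m + m') = (0::complex)"
    by (metis add.right_inverse of_nat_add)
  with m \<open>l \<noteq> 0\<close> show False
    by (simp only: of_nat_eq_0_iff add_is_0) simp
qed

lemma weight_nonpos_even:
  assumes "v \<noteq> 0" "H v = \<nu> *s v"
  shows "\<exists>j::nat. \<nu> = - 2 * of_nat j"
proof -
  have "inj (\<lambda>k. \<nu> + 2 * of_nat k)"
    by (rule injI) simp
  then obtain j where "(F^^j) v \<noteq> 0" "F ((F^^j) v) = 0"
    using eigenvector_orbit_vanishes[OF linear_H assms(1) H_funpow_F[OF assms(2)]] by auto
  then have "\<nu> + 2 * of_nat j = 0"
    using lowest_weight_eq_0 H_funpow_F[OF assms(2)] by blast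
  then have "\<nu> = - 2 * of_nat j"
    by (simp add: algebra_simps add_eq_0_iff)
  then show ?thesis ..
qed

end

section \<open>Matrix units and sl2-triples in \<open>sl\<^sub>n\<close>\<close>

definition matrix_unit :: "'n \<Rightarrow> 'n \<Rightarrow> complex^'n^'n" where
  "matrix_unit i j = (\<chi> a b. if a = i \<and> b = j then 1 else 0)"

lemma matrix_unit_entry [simp]: "matrix_unit i j $ a $ b = (if a = i \<and> b = j then 1 else 0)"
  by (simp add: matrix_unit_def)

lemma matrix_unit_mult_left: "(matrix_unit i j ** A) $ a $ b = (if a = i then A $ j $ b else 0)"
  by (simp add: matrix_matrix_mult_def if_distrib if_distribR sum.delta cong: if_cong)

lemma matrix_unit_mult_right: "(A ** matrix_unit i j) $ a $ b = (if b = j then A $ a $ i else 0)"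
  by (simp add: matrix_matrix_mult_def if_distrib if_distribR sum.delta' cong: if_cong)

lemma matrix_unit_mult: "matrix_unit i j ** matrix_unit k l = (if j = k then matrix_unit i l else 0)"
  by (simp add: vec_eq_iff matrix_unit_mult_left)

lemma matrix_mult_diff_left: "((A::complex^'n^'n) - B) ** C = A ** C - B ** C"
  by (simp add: vec_eq_iff matrix_matrix_mult_def left_diff_distrib sum_subtractf)

lemma matrix_mult_diff_right: "(C::complex^'n^'n) ** (A - B) = C ** A - C ** B"
  by (simp add: vec_eq_iff matrix_matrix_mult_def right_diff_distrib sum_subtractf)

lemma matrix_mult_neg_left: "(- (A::complex^'n^'n)) ** B = - (A ** B)"
  by (simp add: vec_eq_iff matrix_matrix_mult_def sum_negf)

lemma matrix_mult_neg_right: "(B::complex^'n^'n) ** (- A) = - (B ** A)"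
  by (simp add: vec_eq_iff matrix_matrix_mult_def sum_negf)

lemma mscale_entry [simp]: "mscale c A $ a $ b = c * A $ a $ b"
  by (simp add: mscale_def)

lemma mscale_zero_left [simp]: "mscale 0 A = 0"
  by (simp add: vec_eq_iff)

lemma mscale_zero_right [simp]: "mscale c 0 = 0"
  by (simp add: vec_eq_iff)

lemma trace_matrix_unit: "trace (matrix_unit i j) = (if i = j then 1 else 0)"
proof (cases "i = j")
  case False
  then have "trace (matrix_unit i j) = 0"
    unfolding trace_def by (intro sum.neutral) auto
  with False show ?thesis by simp
qed (simp add: trace_def)

lemma sl_zero: "0 \<in> sl"
  by (simp add: sl_def trace_def)

lemma sl_add: "A \<in> sl \<Longrightarrow> B \<in> sl \<Longrightarrow> A + B \<in> sl"
  by (simp add: sl_def trace_add)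

lemma sl_mscale: "A \<in> sl \<Longrightarrow> mscale c A \<in> sl"
  by (simp add: sl_def trace_def sum_distrib_left[symmetric])

lemma sl_neg: "A \<in> sl \<Longrightarrow> - A \<in> sl"
  by (simp add: sl_def trace_def sum_negf)

lemma sl_sum: "(\<And>x. x \<in> S \<Longrightarrow> M x \<in> sl) \<Longrightarrow> (\<Sum>x\<in>S. M x) \<in> sl"
  by (induction S rule: infinite_finite_induct) (auto simp: sl_zero sl_add)

lemma sl_matrix_unit: "i \<noteq> j \<Longrightarrow> matrix_unit i j \<in> sl"
  by (simp add: sl_def trace_matrix_unit)

lemma sl_matrix_unit_diff: "matrix_unit i i - matrix_unit j j \<in> sl"
  by (simp add: sl_def trace_sub trace_matrix_unit)

definition sl2_triple :: "complex^'n^'n \<Rightarrow> complex^'n^'n \<Rightarrow> complex^'n^'n \<Rightarrow> bool" where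
  "sl2_triple h e f \<longleftrightarrow> h \<in> sl \<and> e \<in> sl \<and> f \<in> sl \<and>
     h ** e - e ** h = mscale 2 e \<and> h ** f - f ** h = mscale (-2) f \<and> e ** f - f ** e = h"

lemma sl2_triple_swap:
  assumes "sl2_triple h e f"
  shows "sl2_triple (- h) f e"
proof -
  have neg_mscale: "- mscale c A = mscale (- c) A" for c and A :: "complex^'n^'n"
    by (simp add: vec_eq_iff)
  have "(- h) ** f - f ** (- h) = - (h ** f - f ** h)"
    and "(- h) ** e - e ** (- h) = - (h ** e - e ** h)"
    and "f ** e - e ** f = - (e ** f - f ** e)"
    by (simp_all add: matrix_mult_neg_left matrix_mult_neg_right)
  with assms show ?thesis
    unfolding sl2_triple_def by (simp add: sl_neg neg_mscale)
qed

lemma sl2_triple_matrix_units: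
  assumes "i \<noteq> j"
  shows "sl2_triple (matrix_unit i i - matrix_unit j j) (matrix_unit i j) (matrix_unit j i)"
  using assms
  by (simp add: sl2_triple_def sl_matrix_unit sl_matrix_unit_diff matrix_mult_diff_left
      matrix_mult_diff_right matrix_unit_mult vec_eq_iff)

lemma sl_center_trivial:
  assumes "CARD('n) \<ge> 2" and "(a::complex^'n^'n) \<in> sl"
    and commutes: "\<And>s. s \<in> sl \<Longrightarrow> s ** a = a ** s"
  shows "a = 0"
proof -
  have other_index: "\<exists>i. i \<noteq> (j::'n)" for j
  proof (rule ccontr)
    assume "\<nexists>i. i \<noteq> j"
    then have "(UNIV :: 'n set) = {j}" by auto
    then have "CARD('n) = card {j}" by (rule arg_cong)
    with assms(1) show False by simp
  qed
  have unit_commutes: "(matrix_unit i j ** a) $ p $ q = (a ** matrix_unit i j) $ p $ q"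
    if "i \<noteq> j" for i j p q
    using commutes[OF sl_matrix_unit[OF that]] by simp
  have off_diagonal: "a $ j $ q = 0" if "q \<noteq> j" for j q
  proof -
    obtain i where "i \<noteq> j" using other_index by blast
    from unit_commutes[OF this, of i q] that show ?thesis
      by (simp add: matrix_unit_mult_left matrix_unit_mult_right)
  qed
  have diagonal_const: "a $ j $ j = a $ i $ i" for i j
  proof (cases "i = j")
    case False
    from unit_commutes[OF False, of i j] show ?thesis
      by (simp add: matrix_unit_mult_left matrix_unit_mult_right)
  qed simp
  have "trace a = (\<Sum>i\<in>(UNIV :: 'n set). a $ j $ j)" for j
    unfolding trace_def by (rule sum.cong) (auto intro: diagonal_const)
  moreover have "trace a = 0"
    using assms(2) by (simp add: sl_def)
  ultimately have "a $ j $ j = 0" for j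
    using assms(1) by simp
  with off_diagonal show ?thesis
    by (simp add: vec_eq_iff) (metis)
qed

definition sl_basis :: "'n \<Rightarrow> 'n \<Rightarrow> 'n \<Rightarrow> complex^'n^'n" where
  "sl_basis i0 p q = (if p = q then matrix_unit p p - matrix_unit i0 i0 else matrix_unit p q)"

lemma sl_basis_in_sl: "sl_basis i0 p q \<in> sl"
  by (simp add: sl_basis_def sl_matrix_unit sl_matrix_unit_diff)

lemma sl_basis_entry:
  "sl_basis i0 p q $ a $ b
    = (if a = p \<and> b = q then 1 else 0) - (if p = q \<and> a = i0 \<and> b = i0 then 1 else 0)"
  by (auto simp: sl_basis_def)

lemma sum_mult_delta:
  fixes j :: "'k::finite"
  shows "(\<Sum>k\<in>UNIV. (f k :: complex) * (if j = k then 1 else 0)) = f j"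
proof -
  have "(\<Sum>k\<in>UNIV. f k * (if j = k then 1 else 0)) = (\<Sum>k\<in>UNIV. if j = k then f k else 0)"
    by (rule sum.cong) auto
  also have "\<dots> = f j"
    by (subst sum.delta') auto
  finally show ?thesis .
qed

lemma sl_eq_sum_sl_basis:
  assumes "g \<in> sl"
  shows "g = (\<Sum>p\<in>UNIV. \<Sum>q\<in>UNIV. mscale (g $ p $ q) (sl_basis i0 p q))"
proof -
  have "(\<Sum>p\<in>UNIV. \<Sum>q\<in>UNIV. mscale (g $ p $ q) (sl_basis i0 p q)) $ a $ b = g $ a $ b" for a b
  proof -
    have "(\<Sum>p\<in>UNIV. \<Sum>q\<in>UNIV. mscale (g $ p $ q) (sl_basis i0 p q)) $ a $ b
        = (\<Sum>p\<in>UNIV. \<Sum>q\<in>UNIV. g $ p $ q * (if a = p \<and> b = q then 1 else 0))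
          - (\<Sum>p\<in>UNIV. \<Sum>q\<in>UNIV. g $ p $ q * (if p = q \<and> a = i0 \<and> b = i0 then 1 else 0))"
      by (simp add: sum_component sl_basis_entry right_diff_distrib sum_subtractf)
    also have "(\<Sum>p\<in>UNIV. \<Sum>q\<in>UNIV. g $ p $ q * (if a = p \<and> b = q then 1 else 0)) = g $ a $ b"
    proof -
      have "(\<Sum>p\<in>UNIV. \<Sum>q\<in>UNIV. g $ p $ q * (if a = p \<and> b = q then 1 else 0))
          = (\<Sum>p\<in>UNIV. if p = a then g $ p $ b else 0)"
        by (rule sum.cong[OF refl]) (auto simp: sum_mult_delta intro: sum.neutral)
      then show ?thesis by simp
    qed
    also have "(\<Sum>p\<in>UNIV. \<Sum>q\<in>UNIV. g $ p $ q * (if p = q \<and> a = i0 \<and> b = i0 then 1 else 0)) = 0"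
    proof (cases "a = i0 \<and> b = i0")
      case True
      then have "(\<Sum>p\<in>UNIV. \<Sum>q\<in>UNIV. g $ p $ q * (if p = q \<and> a = i0 \<and> b = i0 then 1 else 0))
          = trace g"
        unfolding trace_def by (intro sum.cong refl) (simp add: sum_mult_delta)
      also have "\<dots> = 0" using assms by (simp add: sl_def)
      finally show ?thesis .
    qed auto
    finally show ?thesis by simp
  qed
  then show ?thesis by (simp add: vec_eq_iff)
qed

section \<open>Modules over \<open>sl\<^sub>n\<close>\<close>

locale sl_module =
  fixes act :: "complex^'m \<Rightarrow> complex^'n^'n \<Rightarrow> complex^'m"
  assumes module: "right_sl_module act"
begin

lemma act_add_vec: "g \<in> sl \<Longrightarrow> act (v + w) g = act v g + act w g"
  using module by (simp add: right_sl_module_def)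

lemma act_scale_vec: "g \<in> sl \<Longrightarrow> act (c *s v) g = c *s act v g"
  using module by (simp add: right_sl_module_def)

lemma act_add_mat: "g \<in> sl \<Longrightarrow> h \<in> sl \<Longrightarrow> act v (g + h) = act v g + act v h"
  using module by (simp add: right_sl_module_def)

lemma act_mscale_mat: "g \<in> sl \<Longrightarrow> act v (mscale c g) = c *s act v g"
  using module by (simp add: right_sl_module_def)

lemma act_bracket:
  "g \<in> sl \<Longrightarrow> h \<in> sl \<Longrightarrow> act v (g ** h - h ** g) = act (act v g) h - act (act v h) g"
  using module by (simp add: right_sl_module_def)

lemma linear_act: "g \<in> sl \<Longrightarrow> Vector_Spaces.linear (*s) (*s) (\<lambda>v. act v g)"
  by (simp add: Vector_Spaces.linear_iff vec.vector_space_axioms act_add_vec act_scale_vec)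

lemma act_zero_vec: "g \<in> sl \<Longrightarrow> act 0 g = 0"
  using act_scale_vec[of g 0 0] by simp

lemma act_zero_mat: "act v 0 = 0"
  using act_add_mat[OF sl_zero sl_zero, of v] by simp

lemma act_neg_vec: "g \<in> sl \<Longrightarrow> act (- v) g = - act v g"
  using act_scale_vec[of g "-1" v] by simp

lemma act_neg_mat:
  assumes "g \<in> sl"
  shows "act v (- g) = - act v g"
proof -
  have "mscale (-1) g = - g"
    by (simp add: vec_eq_iff)
  then show ?thesis
    using act_mscale_mat[OF assms, of v "-1"] by simp
qed

lemma act_sum_mat: "(\<And>x. x \<in> S \<Longrightarrow> M x \<in> sl) \<Longrightarrow> act v (\<Sum>x\<in>S. M x) = (\<Sum>x\<in>S. act v (M x))"
  by (induction S rule: infinite_finite_induct) (simp_all add: act_zero_mat act_add_mat sl_sum)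

lemma sl2_rep_act:
  assumes "sl2_triple h e f"
  shows "sl2_rep (\<lambda>v. act v h) (\<lambda>v. act v e) (\<lambda>v. act v f)"
proof (rule sl2_rep.intro)
  have sl: "h \<in> sl" "e \<in> sl" "f \<in> sl"
    and brackets: "h ** e - e ** h = mscale 2 e" "h ** f - f ** h = mscale (-2) f" "e ** f - f ** e = h"
    using assms by (simp_all add: sl2_triple_def)
  show "Vector_Spaces.linear (*s) (*s) (\<lambda>v. act v h)" "Vector_Spaces.linear (*s) (*s) (\<lambda>v. act v e)"
    "Vector_Spaces.linear (*s) (*s) (\<lambda>v. act v f)"
    using sl by (simp_all add: linear_act)
  show "act (act x h) e - act (act x e) h = 2 *s act x e" for x
    using act_bracket[OF sl(1,2), of x] act_mscale_mat[OF sl(2), of x 2] brackets(1) by simp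
  show "act (act x h) f - act (act x f) h = (-2) *s act x f" for x
    using act_bracket[OF sl(1,3), of x] act_mscale_mat[OF sl(3), of x "-2"] brackets(2) by simp
  show "act (act x e) f - act (act x f) e = act x h" for x
    using act_bracket[OF sl(2,3), of x] brackets(3) by simp
qed

lemma act_eq_0_if_matrix_units_act_trivially:
  assumes units: "\<And>i j v. i \<noteq> j \<Longrightarrow> act v (matrix_unit i j) = 0"
    and "g \<in> sl"
  shows "act v g = 0"
proof -
  fix i0 :: 'n
  have diagonal: "act w (matrix_unit p p - matrix_unit q q) = 0" for p q w
  proof (cases "p = q")
    case False
    have "matrix_unit p q ** matrix_unit q p - matrix_unit q p ** matrix_unit p q
        = matrix_unit p p - matrix_unit q q"
      using False by (simp add: matrix_unit_mult)
    with act_bracket[OF sl_matrix_unit[OF False] sl_matrix_unit[OF not_sym[OF False]], of w]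
    show ?thesis
      using units False act_zero_vec sl_matrix_unit by (metis diff_self)
  qed (simp add: act_zero_mat)
  have basis: "act w (sl_basis i0 p q) = 0" for p q w
    by (cases "p = q") (simp_all add: sl_basis_def diagonal units)
  have "act v g = act v (\<Sum>p\<in>UNIV. \<Sum>q\<in>UNIV. mscale (g $ p $ q) (sl_basis i0 p q))"
    using sl_eq_sum_sl_basis[OF \<open>g \<in> sl\<close>] by simp
  also have "\<dots> = 0"
    by (simp add: act_sum_mat sl_sum sl_mscale sl_basis_in_sl act_mscale_mat basis)
  finally show ?thesis .
qed

end

definition weight_reversing ::
    "(complex^'m \<Rightarrow> complex^'n^'n \<Rightarrow> complex^'m) \<Rightarrow> (complex^'m \<Rightarrow> complex^'m) \<Rightarrow> bool" where
  "weight_reversing act B \<longleftrightarrow> (\<forall>g\<in>sl. \<forall>v \<mu>.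
     (act v g = 0 \<longrightarrow> act (B v) g = 0) \<and>
     (act (B v) g = 0 \<longrightarrow> act v g = 0) \<and>
     (act (act v g) g = \<mu> *s act v g \<longrightarrow> act (act (B v) g) g = (- \<mu>) *s act (B v) g))"

context sl_module
begin

lemma weight_reversing_sl2_rep_flip:
  assumes "weight_reversing act B" and "sl2_triple h e f"
  shows "sl2_rep_flip (\<lambda>v. act v h) (\<lambda>v. act v e) (\<lambda>v. act v f) B"
proof (rule sl2_rep_flip.intro)
  show "sl2_rep (\<lambda>v. act v h) (\<lambda>v. act v e) (\<lambda>v. act v f)"
    by (rule sl2_rep_act[OF assms(2)])
  have "h \<in> sl" "f \<in> sl"
    using assms(2) by (simp_all add: sl2_triple_def)
  with assms(1) show "sl2_rep_flip_axioms (\<lambda>v. act v h) (\<lambda>v. act v f) B"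
    unfolding sl2_rep_flip_axioms_def weight_reversing_def by blast
qed

lemma weight_reversing_imp_trivial_action:
  assumes "weight_reversing act B" and "g \<in> sl"
  shows "act v g = 0"
proof (rule act_eq_0_if_matrix_units_act_trivially[OF _ \<open>g \<in> sl\<close>])
  fix i j :: 'n and w
  assume "i \<noteq> j"
  define h where "h = matrix_unit i i - matrix_unit j j"
  have triple: "sl2_triple h (matrix_unit i j) (matrix_unit j i)"
    using sl2_triple_matrix_units[OF \<open>i \<noteq> j\<close>] by (simp add: h_def)
  interpret hef: sl2_rep_flip "\<lambda>v. act v h" "\<lambda>v. act v (matrix_unit i j)" "\<lambda>v. act v (matrix_unit j i)" B
    by (rule weight_reversing_sl2_rep_flip[OF assms(1) triple])
  interpret hfe: sl2_rep_flip "\<lambda>v. act v (- h)" "\<lambda>v. act v (matrix_unit j i)" "\<lambda>v. act v (matrix_unit i j)" B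
    by (rule weight_reversing_sl2_rep_flip[OF assms(1) sl2_triple_swap[OF triple]])
  have "r = 0" if eigen: "act y h = r *s y" and "y \<noteq> 0" for y r
  proof -
    obtain j1 :: nat where "r = - 2 * of_nat j1"
      using hef.weight_nonpos_even[OF \<open>y \<noteq> 0\<close> eigen] by blast
    moreover have "act y (- h) = (- r) *s y"
      using eigen act_neg_mat triple by (simp add: sl2_triple_def)
    then obtain j2 :: nat where "- r = - 2 * of_nat j2"
      using hfe.weight_nonpos_even[OF \<open>y \<noteq> 0\<close>] by blast
    ultimately have "of_nat (j1 + j2) = (0::complex)"
      by simp
    with \<open>r = - 2 * of_nat j1\<close> show ?thesis
      by (simp only: of_nat_eq_0_iff add_is_0) simp
  qed
  then show "act w (matrix_unit i j) = 0"
    by (rule hef.E_eq_0_if_no_nonzero_weight)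
qed

end

section \<open>Automorphisms of the Leibniz algebra\<close>

lemma mem_Lcar [simp]: "(g, v) \<in> Lcar \<longleftrightarrow> g \<in> sl"
  by (simp add: Lcar_def)

lemma L_linear_zero:
  assumes "L_linear \<Phi>"
  shows "\<Phi> (0, 0) = (0, 0)"
proof -
  have "(0, 0) \<in> Lcar"
    using sl_zero by simp
  then have "\<Phi> (lscale 0 (0, 0)) = lscale 0 (\<Phi> (0, 0))"
    using assms unfolding L_linear_def by blast
  then show ?thesis
    by (simp add: lscale_def)
qed

context sl_module
begin

lemma fst_automorphism_module_eq_0:
  assumes "CARD('n) \<ge> 2" and aut: "L_automorphism act \<Phi>"
  shows "fst (\<Phi> (0, w)) = 0"
proof -
  have lin: "L_linear \<Phi>" and bij: "bij_betw \<Phi> Lcar Lcar"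
    and hom: "\<And>x y. x \<in> Lcar \<Longrightarrow> y \<in> Lcar \<Longrightarrow> \<Phi> (lbr act x y) = lbr act (\<Phi> x) (\<Phi> y)"
    using aut by (auto simp: L_automorphism_def)
  define a where "a = fst (\<Phi> (0, w))"
  have w_Lcar: "(0, w) \<in> Lcar"
    using sl_zero by simp
  then have "\<Phi> (0, w) \<in> Lcar"
    using lin unfolding L_linear_def by blast
  then have "a \<in> sl"
    by (auto simp: a_def Lcar_def)
  moreover have "s ** a = a ** s" if "s \<in> sl" for s
  proof -
    have "(s, 0) \<in> \<Phi> ` Lcar"
      using bij that by (simp add: bij_betw_def)
    then obtain y where y: "y \<in> Lcar" "\<Phi> y = (s, 0)"
      by (metis imageE)
    have "lbr act (\<Phi> y) (\<Phi> (0, w)) = \<Phi> (lbr act y (0, w))"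
      using hom[OF y(1) w_Lcar] by (rule sym)
    also have "\<dots> = \<Phi> (0, 0)"
      by (simp add: lbr_def act_zero_mat)
    also have "\<dots> = (0, 0)"
      by (rule L_linear_zero[OF lin])
    finally have "lbr act (\<Phi> y) (\<Phi> (0, w)) = (0, 0)" .
    then show ?thesis
      using y(2) by (simp add: lbr_def a_def)
  qed
  ultimately have "a = 0"
    by (rule sl_center_trivial[OF assms(1)])
  then show ?thesis
    by (simp add: a_def)
qed

lemma automorphism_self_brackets:
  assumes aut: "L_automorphism act \<Phi>" and "g \<in> sl" and image: "\<Phi> (g, v) = (- g, u)"
  shows "\<Phi> (0, act v g) = (0, - act u g)"
    and "\<Phi> (0, act (act v g) g) = (0, act (act u g) g)"
proof -
  have hom: "\<And>x y. x \<in> Lcar \<Longrightarrow> y \<in> Lcar \<Longrightarrow> \<Phi> (lbr act x y) = lbr act (\<Phi> x) (\<Phi> y)"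
    using aut by (simp add: L_automorphism_def)
  have "\<Phi> (0, act v g) = \<Phi> (lbr act (g, v) (g, v))"
    by (simp add: lbr_def)
  also have "\<dots> = lbr act (- g, u) (- g, u)"
    using hom \<open>g \<in> sl\<close> image by simp
  also have "\<dots> = (0, - act u g)"
    by (simp add: lbr_def act_neg_mat[OF \<open>g \<in> sl\<close>])
  finally show first: "\<Phi> (0, act v g) = (0, - act u g)" .
  have "\<Phi> (0, act (act v g) g) = \<Phi> (lbr act (0, act v g) (g, v))"
    by (simp add: lbr_def)
  also have "\<dots> = lbr act (0, - act u g) (- g, u)"
    using hom[of "(0, act v g)" "(g, v)"] \<open>g \<in> sl\<close> sl_zero image first by simp
  also have "\<dots> = (0, act (act u g) g)"
    using \<open>g \<in> sl\<close> sl_neg[OF \<open>g \<in> sl\<close>]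
    by (simp add: lbr_def act_neg_vec act_neg_mat)
  finally show "\<Phi> (0, act (act v g) g) = (0, act (act u g) g)" .
qed

lemma automorphism_image_neg_act_eq_0_iff:
  assumes aut: "L_automorphism act \<Phi>" and "g \<in> sl" and image: "\<Phi> (g, v) = (- g, u)"
  shows "act u g = 0 \<longleftrightarrow> act v g = 0"
proof -
  have "inj_on \<Phi> Lcar" and "\<Phi> (0, 0) = (0, 0)"
    using aut by (simp_all add: L_automorphism_def bij_betw_def L_linear_zero)
  moreover have "(0, act v g) \<in> Lcar" "(0, 0) \<in> Lcar"
    using sl_zero by simp_all
  ultimately have "\<Phi> (0, act v g) = (0, 0) \<longleftrightarrow> act v g = 0"
    by (metis Pair_inject inj_onD)
  then show ?thesis
    using automorphism_self_brackets(1)[OF assms] by simp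
qed

lemma automorphism_image_neg_eigenvalue:
  assumes aut: "L_automorphism act \<Phi>" and "g \<in> sl" and image: "\<Phi> (g, v) = (- g, u)"
    and eigen: "act (act v g) g = \<mu> *s act v g"
  shows "act (act u g) g = (- \<mu>) *s act u g"
proof -
  have "L_linear \<Phi>"
    using aut by (simp add: L_automorphism_def)
  moreover have "(0, act v g) \<in> Lcar"
    using sl_zero by simp
  ultimately have "\<Phi> (lscale \<mu> (0, act v g)) = lscale \<mu> (\<Phi> (0, act v g))"
    unfolding L_linear_def by blast
  moreover have "lscale \<mu> (0, act v g) = (0, act (act v g) g)"
    using eigen by (simp add: lscale_def)
  ultimately have "\<Phi> (0, act (act v g) g) = lscale \<mu> (\<Phi> (0, act v g))"
    by metis
  then show ?thesis
    using automorphism_self_brackets[OF assms(1-3)] by (simp add: lscale_def)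
qed

lemma local_automorphism_neg_eq:
  assumes "CARD('n) \<ge> 2" and lin: "L_linear \<Delta>" and local: "L_local_automorphism act \<Delta>"
    and neg: "\<forall>x\<in>sl. fst (\<Delta> (x, 0)) = - x" and "g \<in> sl"
  shows "\<Delta> (g, v) = (- g, snd (\<Delta> (g, 0)) + snd (\<Delta> (0, v)))"
proof -
  from local sl_zero obtain \<Phi> where "L_automorphism act \<Phi>" "\<Phi> (0, v) = \<Delta> (0, v)"
    by (force simp: L_local_automorphism_def)
  then have "fst (\<Delta> (0, v)) = 0"
    using fst_automorphism_module_eq_0[OF assms(1)] by metis
  moreover have "(g, 0) \<in> Lcar" "(0, v) \<in> Lcar"
    using \<open>g \<in> sl\<close> sl_zero by simp_all
  then have "\<Delta> ((g, 0) + (0, v)) = \<Delta> (g, 0) + \<Delta> (0, v)"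
    using lin unfolding L_linear_def by blast
  ultimately show ?thesis
    using neg \<open>g \<in> sl\<close> by (simp add: prod_eq_iff)
qed

lemma local_automorphism_weight_reversing:
  assumes "CARD('n) \<ge> 2" and lin: "L_linear \<Delta>" and local: "L_local_automorphism act \<Delta>"
    and neg: "\<forall>x\<in>sl. fst (\<Delta> (x, 0)) = - x"
  shows "weight_reversing act (\<lambda>v. snd (\<Delta> (0, v)))"
proof -
  define A where "A g = snd (\<Delta> (g, 0))" for g
  define B where "B v = snd (\<Delta> (0, v))" for v
  have witness: "\<exists>\<Phi>. L_automorphism act \<Phi> \<and> \<Phi> (g, v) = (- g, A g + B v)" if g: "g \<in> sl" for g v
  proof -
    obtain \<Phi> where "L_automorphism act \<Phi>" "\<Phi> (g, v) = \<Delta> (g, v)"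
      using local g by (force simp: L_local_automorphism_def)
    then show ?thesis
      using local_automorphism_neg_eq[OF assms g, of v] by (auto simp: A_def B_def)
  qed
  have "act (A g) g = 0" if "g \<in> sl" for g
  proof -
    have "B 0 = 0"
      using L_linear_zero[OF lin] by (simp add: B_def)
    with witness[OF that, of 0] show ?thesis
      using automorphism_image_neg_act_eq_0_iff that act_zero_vec by fastforce
  qed
  then have act_image: "act (A g + B v) g = act (B v) g" if "g \<in> sl" for g v
    using that by (simp add: act_add_vec)
  have "weight_reversing act B"
    unfolding weight_reversing_def
  proof (intro ballI allI)
    fix g :: "complex^'n^'n" and v :: "complex^'m" and \<mu> :: complex
    assume "g \<in> sl"
    then obtain \<Phi> where "L_automorphism act \<Phi>" "\<Phi> (g, v) = (- g, A g + B v)"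
      using witness by blast
    with \<open>g \<in> sl\<close> show "(act v g = 0 \<longrightarrow> act (B v) g = 0) \<and> (act (B v) g = 0 \<longrightarrow> act v g = 0) \<and>
        (act (act v g) g = \<mu> *s act v g \<longrightarrow> act (act (B v) g) g = (- \<mu>) *s act (B v) g)"
      using automorphism_image_neg_act_eq_0_iff automorphism_image_neg_eigenvalue act_image
      by metis
  qed
  then show ?thesis
    unfolding B_def .
qed

end

theorem lemma3p5:
  fixes act :: "complex^'m \<Rightarrow> complex^'n^'n \<Rightarrow> complex^'m"
    and \<Delta> :: "(complex^'n^'n) \<times> (complex^'m) \<Rightarrow> (complex^'n^'n) \<times> (complex^'m)"
  assumes "CARD('n) \<ge> 2"
    and "right_sl_module act"
    and "irreducible_module act"
    and "nontrivial_action act"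
    and "L_linear \<Delta>"
    and "\<forall>x\<in>sl. fst (\<Delta> (x, 0)) = - x"
  shows "\<not> L_local_automorphism act \<Delta>"
proof
  assume local: "L_local_automorphism act \<Delta>"
  interpret sl_module act
    by (rule sl_module.intro) (fact assms(2))
  have "weight_reversing act (\<lambda>v. snd (\<Delta> (0, v)))"
    using local_automorphism_weight_reversing[OF assms(1,5) local assms(6)] .
  then have "act v g = 0" if "g \<in> sl" for v g
    using weight_reversing_imp_trivial_action that by blast
  with assms(4) show False
    by (auto simp: nontrivial_action_def)
qed

end
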